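(* In $D_n$ the following hold. (1) For all $1\le p<q\le n-1$: $w_q\cdot w_p=w_p\cdot w_q$. (2) For $1\le p<q\le n$ with $p\le n-1$ and $1\le i_q\le q-1$: $$t_{q}^{i_{q}} \cdot w_{p}=\begin{cases} w_{i_{q}} \cdot t_{q}^{i_{q}} & q= p + i_{q}, \\ w_{i_{q}} \cdot w_{p+i_{q}} \cdot t_{q}^{i_{q}} & q > p + i_{q}, \\ w_{p+i_{q}-q} \cdot w_{i_{q}} \cdot t_{q}^{i_{q}} & q < p + i_{q}. \end{cases}$$ (3) For $2\le p<q\le n-1$ and $1\le i_p\le p-1$: $w_q\cdot t_p^{i_p}=w_{i_p}\cdot t_p^{i_p}\cdot w_q$.
   Context: $D_n$ ($n\ge 2$) is the Coxeter group with generators $s_{1'},s_1,\dots,s_{n-1}$ and relations $s^2=1$, $(s_i s_{i+1})^3=1$, $(s_is_j)^2=1$ for $|i-j|\ge 2$, $(s_{1'}s_2)^3=1$, $(s_{1'}s_i)^2=1$ for $i\ne 2$. For $2\le k\le n$, $t_k=s_1s_2\cdots s_{k-1}$; for $1\le k\le n-1$, $w_k=s_k s_{k-1}\cdots s_2 s_1 s_{1'} s_2\cdots s_k$. *)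

theory Defs
  imports Main
begin

text \<open>Generators of D_n: S1' is s_{1'}, S i is s_i (1 <= i <= n-1).
  The group D_n is the quotient of the free monoid on these letters by the
  congruence generated by the Coxeter relators (presentation).\<close>

datatype gen = S1' | S nat

definition valid_gen :: "nat \<Rightarrow> gen \<Rightarrow> bool" where
  "valid_gen n g = (case g of S1' \<Rightarrow> True | S i \<Rightarrow> 1 \<le> i \<and> i \<le> n - 1)"

inductive relator :: "nat \<Rightarrow> gen list \<Rightarrow> bool" for n where
  sq: "valid_gen n s \<Longrightarrow> relator n [s, s]"
| braid3: "1 \<le> i \<Longrightarrow> i + 1 \<le> n - 1 \<Longrightarrow>
     relator n (concat (replicate 3 [S i, S (i+1)]))"
| comm: "1 \<le> i \<Longrightarrow> i \<le> n - 1 \<Longrightarrow> 1 \<le> j \<Longrightarrow> j \<le> n - 1 \<Longrightarrow>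
     i + 2 \<le> j \<or> j + 2 \<le> i \<Longrightarrow> relator n [S i, S j, S i, S j]"
| braid3' : "2 \<le> n - 1 \<Longrightarrow> relator n (concat (replicate 3 [S1', S 2]))"
| comm' : "1 \<le> i \<Longrightarrow> i \<le> n - 1 \<Longrightarrow> i \<noteq> 2 \<Longrightarrow> relator n [S1', S i, S1', S i]"

inductive deq :: "nat \<Rightarrow> gen list \<Rightarrow> gen list \<Rightarrow> bool" for n where
  refl: "deq n u u"
| sym: "deq n u v \<Longrightarrow> deq n v u"
| trans: "deq n u v \<Longrightarrow> deq n v w \<Longrightarrow> deq n u w"
| rel: "relator n r \<Longrightarrow> deq n (u @ r @ v) (u @ v)"

definition tw :: "nat \<Rightarrow> gen list" where
  "tw k = map S [1..<k]"

definition tpow :: "nat \<Rightarrow> nat \<Rightarrow> gen list" where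
  "tpow k i = concat (replicate i (tw k))"

definition ww :: "nat \<Rightarrow> gen list" where
  "ww k = rev (map S [1..<k+1]) @ [S1'] @ map S [2..<k+1]"

end

theory Submission
  imports Defs
begin

text \<open>The basic
  facts are: \<open>w_k\<close> is an involution, \<open>w_(k+1) = s_(k+1) w_k s_(k+1)\<close>, \<open>s_j\<close> commutes with
  \<open>w_k\<close> for \<open>j \<notin> {1, k, k+1}\<close>, and \<open>s_1 w_k = w_1 w_k s_1\<close>. Hence conjugation by \<open>t_q\<close>
  shifts indices: \<open>t_q w_k = w_1 w_(k+1) t_q\<close> for \<open>k + 2 \<le> q\<close>, and \<open>t_q w_(q-1) = w_1 t_q\<close>.
  The \<open>w_k\<close> commute pairwise (by induction from \<open>w_1 w_2 = w_2 w_1\<close> via the braid relations),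
  so the factors \<open>w_1\<close> produced by two consecutive shifts cancel. Iterating the shift gives (2);
  its three cases record whether the index \<open>p + i\<close> has wrapped around \<open>q\<close>. Part (3) follows in
  the same way from \<open>w_q t_p = w_1 t_p w_q\<close>.\<close>

lemma deq_append_left [simp]: "deq n u v \<Longrightarrow> deq n (w @ u) (w @ v)"
proof (induction rule: deq.induct)
  case (rel r u v)
  then show ?case using deq.rel[OF rel, of "w @ u" v] by simp
qed (auto intro: deq.intros)

lemma deq_Cons [simp]: "deq n u v \<Longrightarrow> deq n (x # u) (x # v)"
  using deq_append_left[of n u v "[x]"] by simp

declare deq.refl [simp] deq.trans [trans]

context
  fixes n :: nat
begin

abbreviation deq_n (infix "\<sim>" 50) where "u \<sim> v \<equiv> deq n u v"

text \<open>Relations are stated with an arbitrary tail \<open>r\<close>: as \<open>deq_Cons\<close> and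
  \<open>deq_append_left\<close> strip common prefixes, \<open>simp\<close> then performs a single rewriting step
  anywhere in a word. Facts mentioning the numeral \<open>1\<close> are supplied with \<open>using\<close> instead of
  \<open>simp add\<close>, because \<open>simp\<close> turns \<open>1\<close> into \<open>Suc 0\<close> in the goal (\<open>One_nat_def\<close>) but not in
  its own rewrite rules.\<close>

lemma relator_cancel: "relator n u \<Longrightarrow> u @ r \<sim> r"
  using deq.rel[of n u "[]" r] by simp

lemma gen_square: "valid_gen n x \<Longrightarrow> x # x # r \<sim> r"
  using relator_cancel[OF relator.sq] by simp

lemma commute_of_relator:
  assumes "relator n [x, y, x, y]" "valid_gen n x" "valid_gen n y"
  shows "x # y # r \<sim> y # x # r"
proof -
  have "x # y # r \<sim> x # y # x # x # r" using assms by (simp add: gen_square[THEN deq.sym])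
  also have "\<dots> \<sim> x # y # x # y # y # x # r"
    using assms by (simp add: gen_square[THEN deq.sym])
  also have "\<dots> \<sim> y # x # r" using relator_cancel[OF assms(1), of "y # x # r"] by simp
  finally show ?thesis .
qed

lemma braid_of_relator:
  assumes "relator n (concat (replicate 3 [x, y]))" "valid_gen n x" "valid_gen n y"
  shows "x # y # x # r \<sim> y # x # y # r"
proof -
  have "x # y # x # r \<sim> x # y # x # y # y # r"
    using assms by (simp add: gen_square[THEN deq.sym])
  also have "\<dots> \<sim> x # y # x # y # x # x # y # r"
    using assms by (simp add: gen_square[THEN deq.sym])
  also have "\<dots> \<sim> x # y # x # y # x # y # y # x # y # r"
    using assms by (simp add: gen_square[THEN deq.sym])
  also have "\<dots> \<sim> y # x # y # r"
    using relator_cancel[OF assms(1), of "y # x # y # r"] by (simp add: numeral_3_eq_3)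
  finally show ?thesis .
qed

lemma S_square: "1 \<le> i \<Longrightarrow> i \<le> n - 1 \<Longrightarrow> S i # S i # r \<sim> r"
  by (simp add: gen_square valid_gen_def)

lemma S1'_square: "S1' # S1' # r \<sim> r"
  by (simp add: gen_square valid_gen_def)

lemma S_commute:
  "1 \<le> i \<Longrightarrow> i \<le> n - 1 \<Longrightarrow> 1 \<le> j \<Longrightarrow> j \<le> n - 1 \<Longrightarrow> i + 2 \<le> j \<or> j + 2 \<le> i \<Longrightarrow>
    S i # S j # r \<sim> S j # S i # r"
  by (rule commute_of_relator) (simp_all add: relator.comm valid_gen_def)

lemma S1'_S_commute:
  "1 \<le> i \<Longrightarrow> i \<le> n - 1 \<Longrightarrow> i \<noteq> 2 \<Longrightarrow> S1' # S i # r \<sim> S i # S1' # r"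
  by (rule commute_of_relator) (simp_all add: relator.comm' valid_gen_def)

lemma S_braid:
  "1 \<le> i \<Longrightarrow> Suc i \<le> n - 1 \<Longrightarrow>
    S i # S (Suc i) # S i # r \<sim> S (Suc i) # S i # S (Suc i) # r"
  by (rule braid_of_relator) (use relator.braid3[of i n] in \<open>simp_all add: valid_gen_def\<close>)

lemma S_braid_1_2: "3 \<le> n \<Longrightarrow> S 1 # S 2 # S 1 # r \<sim> S 2 # S 1 # S 2 # r"
  using S_braid[of 1 r] by (simp add: numeral_2_eq_2)

lemma S1'_braid: "2 \<le> n - 1 \<Longrightarrow> S1' # S 2 # S1' # r \<sim> S 2 # S1' # S 2 # r"
  by (rule braid_of_relator) (simp_all add: relator.braid3' valid_gen_def)

lemma ww_Suc: "1 \<le> k \<Longrightarrow> ww (Suc k) = S (Suc k) # ww k @ [S (Suc k)]"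
  by (simp add: ww_def)

lemma set_ww: "set (ww k) \<subseteq> insert S1' (S ` {1..k})"
  by (auto simp: ww_def)

lemma tw_2: "tw 2 = [S 1]"
  by (simp add: tw_def numeral_2_eq_2)

lemma tw_Suc: "1 \<le> k \<Longrightarrow> tw (Suc k) = tw k @ [S k]"
  by (simp add: tw_def)

lemma tpow_Suc: "tpow q (Suc i) = tw q @ tpow q i"
  by (simp add: tpow_def)

lemma commute_word:
  "(\<And>y r. y \<in> set w \<Longrightarrow> x # y # r \<sim> y # x # r) \<Longrightarrow> x # w @ r \<sim> w @ x # r"
proof (induction w arbitrary: r)
  case (Cons y w)
  have "x # (y # w) @ r \<sim> y # x # w @ r" using Cons.prems by simp
  also have "\<dots> \<sim> y # w @ x # r" using Cons by simp
  finally show ?case by simp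
qed simp

lemma S_ww_commute_high:
  assumes "1 \<le> k" "k + 2 \<le> j" "j \<le> n - 1"
  shows "S j # ww k @ r \<sim> ww k @ S j # r"
proof (rule commute_word)
  fix y r assume "y \<in> set (ww k)"
  then consider "y = S1'" | m where "y = S m" "1 \<le> m" "m \<le> k" using set_ww by fastforce
  then show "S j # y # r \<sim> y # S j # r"
  proof cases
    case 1
    then show ?thesis using assms by (simp add: S1'_S_commute[THEN deq.sym])
  next
    case 2
    then show ?thesis using assms by (simp add: S_commute)
  qed
qed

lemma S_ww_commute_low:
  assumes "2 \<le> j" "j < k" "k \<le> n - 1"
  shows "S j # ww k @ r \<sim> ww k @ S j # r"
proof -
  have "Suc j \<le> k" using assms(2) by simp
  then show ?thesis using assms(3)
  proof (induction k arbitrary: r rule: nat_induct_at_least)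
    case base
    obtain m where m: "j = Suc m" "1 \<le> m" using assms(1) by (cases j) auto
    have "S j # ww (Suc j) @ r = S j # S (Suc j) # S j # ww m @ S j # S (Suc j) # r"
      using m by (simp add: ww_Suc)
    also have "\<dots> \<sim> S (Suc j) # S j # S (Suc j) # ww m @ S j # S (Suc j) # r"
      using base m by (simp add: S_braid)
    also have "\<dots> \<sim> S (Suc j) # S j # ww m @ S (Suc j) # S j # S (Suc j) # r"
      using base m by (simp add: S_ww_commute_high)
    also have "\<dots> \<sim> S (Suc j) # S j # ww m @ S j # S (Suc j) # S j # r"
      using base m by (simp add: S_braid[THEN deq.sym])
    also have "\<dots> = ww (Suc j) @ S j # r"
      using m by (simp add: ww_Suc)
    finally show ?case .
  next
    case (Suc k)
    have "S j # ww (Suc k) @ r = S j # S (Suc k) # ww k @ S (Suc k) # r"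
      using Suc assms by (simp add: ww_Suc)
    also have "\<dots> \<sim> S (Suc k) # S j # ww k @ S (Suc k) # r"
      using Suc assms by (simp add: S_commute)
    also have "\<dots> \<sim> S (Suc k) # ww k @ S j # S (Suc k) # r"
      using Suc by simp
    also have "\<dots> \<sim> S (Suc k) # ww k @ S (Suc k) # S j # r"
      using Suc assms by (simp add: S_commute)
    also have "\<dots> = ww (Suc k) @ S j # r"
      using Suc assms by (simp add: ww_Suc)
    finally show ?case .
  qed
qed

lemma ww_square: "1 \<le> k \<Longrightarrow> k \<le> n - 1 \<Longrightarrow> ww k @ ww k @ r \<sim> r"
proof (induction k arbitrary: r rule: nat_induct_at_least)
  case base
  have "ww 1 @ ww 1 @ r = S 1 # S1' # S 1 # S1' # r" by (simp add: ww_def)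
  also have "\<dots> \<sim> S 1 # S 1 # S1' # S1' # r" using base by (simp add: S1'_S_commute)
  also have "\<dots> \<sim> S1' # S1' # r" using base by (simp add: S_square)
  also have "\<dots> \<sim> r" by (simp add: S1'_square)
  finally show ?case .
next
  case (Suc k)
  have "ww (Suc k) @ ww (Suc k) @ r =
      S (Suc k) # ww k @ S (Suc k) # S (Suc k) # ww k @ S (Suc k) # r"
    using Suc by (simp add: ww_Suc)
  also have "\<dots> \<sim> S (Suc k) # ww k @ ww k @ S (Suc k) # r"
    using Suc by (simp add: S_square)
  also have "\<dots> \<sim> S (Suc k) # S (Suc k) # r" using Suc by simp
  also have "\<dots> \<sim> r" using Suc by (simp add: S_square)
  finally show ?case .
qed

lemma ww_1_2_commute: "3 \<le> n \<Longrightarrow> ww 1 @ ww 2 @ r \<sim> ww 2 @ ww 1 @ r"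
proof -
  assume "3 \<le> n"
  then have n: "1 \<le> n - 1" "2 \<le> n - 1" by simp_all
  have "ww 1 @ ww 2 @ r = S 1 # S1' # S 2 # S 1 # S1' # S 2 # r"
    by (simp add: ww_def numeral_2_eq_2)
  also have "\<dots> \<sim> S 1 # S1' # S 2 # S1' # S 1 # S 2 # r"
    using n by (simp add: S1'_S_commute[THEN deq.sym])
  also have "\<dots> \<sim> S 1 # S 2 # S1' # S 2 # S 1 # S 2 # r" using n by (simp add: S1'_braid)
  also have "\<dots> \<sim> S 1 # S 2 # S1' # S 1 # S 2 # S 1 # r"
    using \<open>3 \<le> n\<close> S_braid_1_2[THEN deq.sym] by simp
  also have "\<dots> \<sim> S 1 # S 2 # S 1 # S1' # S 2 # S 1 # r"
    using n by (simp add: S1'_S_commute)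
  also have "\<dots> \<sim> S 2 # S 1 # S 2 # S1' # S 2 # S 1 # r"
    using \<open>3 \<le> n\<close> S_braid_1_2 by simp
  also have "\<dots> \<sim> S 2 # S 1 # S1' # S 2 # S1' # S 1 # r"
    using n by (simp add: S1'_braid[THEN deq.sym])
  also have "\<dots> \<sim> S 2 # S 1 # S1' # S 2 # S 1 # S1' # r"
    using n by (simp add: S1'_S_commute)
  also have "\<dots> = ww 2 @ ww 1 @ r" by (simp add: ww_def numeral_2_eq_2)
  finally show ?thesis .
qed

lemma S1_ww: "2 \<le> k \<Longrightarrow> k \<le> n - 1 \<Longrightarrow> S 1 # ww k @ r \<sim> ww 1 @ ww k @ S 1 # r"
proof (induction k arbitrary: r rule: nat_induct_at_least)
  case base
  then have n: "3 \<le> n" "1 \<le> n - 1" "2 \<le> n - 1" by simp_all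
  have "ww 1 @ ww 2 @ S 1 # r \<sim> ww 2 @ ww 1 @ S 1 # r" using n ww_1_2_commute by simp
  also have "\<dots> = S 2 # S 1 # S1' # S 2 # S 1 # S1' # S 1 # r"
    by (simp add: ww_def numeral_2_eq_2)
  also have "\<dots> \<sim> S 2 # S 1 # S1' # S 2 # S 1 # S 1 # S1' # r"
    using n by (simp add: S1'_S_commute)
  also have "\<dots> \<sim> S 2 # S 1 # S1' # S 2 # S1' # r" using n by (simp add: S_square)
  also have "\<dots> \<sim> S 2 # S 1 # S 2 # S1' # S 2 # r" using n by (simp add: S1'_braid)
  also have "\<dots> \<sim> S 1 # S 2 # S 1 # S1' # S 2 # r"
    using n S_braid_1_2[THEN deq.sym] by simp
  also have "\<dots> = S 1 # ww 2 @ r" by (simp add: ww_def numeral_2_eq_2)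
  finally show ?case by (rule deq.sym)
next
  case (Suc k)
  have "S 1 # ww (Suc k) @ r = S 1 # S (Suc k) # ww k @ S (Suc k) # r"
    using Suc by (simp add: ww_Suc)
  also have "\<dots> \<sim> S (Suc k) # S 1 # ww k @ S (Suc k) # r"
    using Suc by (simp add: S_commute)
  also have "\<dots> \<sim> S (Suc k) # ww 1 @ ww k @ S 1 # S (Suc k) # r" using Suc by simp
  also have "\<dots> \<sim> ww 1 @ S (Suc k) # ww k @ S 1 # S (Suc k) # r"
    using Suc by (simp add: S_ww_commute_high)
  also have "\<dots> \<sim> ww 1 @ S (Suc k) # ww k @ S (Suc k) # S 1 # r"
    using Suc by (simp add: S_commute)
  also have "\<dots> = ww 1 @ ww (Suc k) @ S 1 # r" using Suc by (simp add: ww_Suc)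
  finally show ?case .
qed

lemma ww_Suc_commute:
  "1 \<le> p \<Longrightarrow> Suc p \<le> n - 1 \<Longrightarrow> ww p @ ww (Suc p) @ r \<sim> ww (Suc p) @ ww p @ r"
proof (induction p arbitrary: r rule: nat_induct_at_least)
  case base
  then show ?case using ww_1_2_commute by (simp add: numeral_2_eq_2)
next
  case (Suc m)
  define p where "p = Suc m"
  have p: "p = Suc m" "1 \<le> m" "Suc p \<le> n - 1" using Suc by (simp_all add: p_def)
  \<comment> \<open>the induction hypothesis says that \<open>w_m s_p w_m\<close> commutes with \<open>s_p\<close>\<close>
  have IH: "ww m @ S p # ww m @ S p # r' \<sim> S p # ww m @ S p # ww m @ r'" for r'
    using Suc.IH[of r'] p by (simp add: ww_Suc p_def)
  have "ww p @ ww (Suc p) @ r = S p # ww m @ S p # S (Suc p) # S p # ww m @ S p # S (Suc p) # r"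
    using p by (simp add: ww_Suc p_def)
  also have "\<dots> \<sim> S p # ww m @ S (Suc p) # S p # S (Suc p) # ww m @ S p # S (Suc p) # r"
    using p by (simp add: S_braid)
  also have "\<dots> \<sim> S p # S (Suc p) # ww m @ S p # S (Suc p) # ww m @ S p # S (Suc p) # r"
    using p by (simp add: S_ww_commute_high[THEN deq.sym])
  also have "\<dots> \<sim> S p # S (Suc p) # ww m @ S p # ww m @ S (Suc p) # S p # S (Suc p) # r"
    using p by (simp add: S_ww_commute_high)
  also have "\<dots> \<sim> S p # S (Suc p) # ww m @ S p # ww m @ S p # S (Suc p) # S p # r"
    using p by (simp add: S_braid[THEN deq.sym])
  also have "\<dots> \<sim> S p # S (Suc p) # S p # ww m @ S p # ww m @ S (Suc p) # S p # r"
    using IH by simp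
  also have "\<dots> \<sim> S (Suc p) # S p # S (Suc p) # ww m @ S p # ww m @ S (Suc p) # S p # r"
    using p by (simp add: S_braid)
  also have "\<dots> \<sim> S (Suc p) # S p # ww m @ S (Suc p) # S p # ww m @ S (Suc p) # S p # r"
    using p by (simp add: S_ww_commute_high)
  also have "\<dots> \<sim> S (Suc p) # S p # ww m @ S (Suc p) # S p # S (Suc p) # ww m @ S p # r"
    using p by (simp add: S_ww_commute_high[THEN deq.sym])
  also have "\<dots> \<sim> S (Suc p) # S p # ww m @ S p # S (Suc p) # S p # ww m @ S p # r"
    using p by (simp add: S_braid[THEN deq.sym])
  also have "\<dots> = ww (Suc p) @ ww p @ r"
    using p by (simp add: ww_Suc p_def)
  finally show ?case by (simp add: p_def)
qed

lemma ww_commute: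
  assumes "1 \<le> p" "p < q" "q \<le> n - 1"
  shows "ww q @ ww p @ r \<sim> ww p @ ww q @ r"
proof -
  have "Suc p \<le> q" using assms(2) by simp
  then show ?thesis using assms(3)
  proof (induction q arbitrary: r rule: nat_induct_at_least)
    case base
    then show ?case using assms by (simp add: ww_Suc_commute[THEN deq.sym])
  next
    case (Suc q)
    have "ww (Suc q) @ ww p @ r = S (Suc q) # ww q @ S (Suc q) # ww p @ r"
      using Suc by (simp add: ww_Suc)
    also have "\<dots> \<sim> S (Suc q) # ww q @ ww p @ S (Suc q) # r"
      using Suc assms by (simp add: S_ww_commute_high)
    also have "\<dots> \<sim> S (Suc q) # ww p @ ww q @ S (Suc q) # r" using Suc by simp
    also have "\<dots> \<sim> ww p @ S (Suc q) # ww q @ S (Suc q) # r"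
      using Suc assms by (simp add: S_ww_commute_high)
    also have "\<dots> = ww p @ ww (Suc q) @ r" using Suc by (simp add: ww_Suc)
    finally show ?case .
  qed
qed

lemma ww_1_ww_ww_1: "2 \<le> k \<Longrightarrow> k \<le> n - 1 \<Longrightarrow> ww 1 @ ww k @ ww 1 @ r \<sim> ww k @ r"
proof -
  assume k: "2 \<le> k" "k \<le> n - 1"
  have "ww 1 @ ww k @ ww 1 @ r \<sim> ww 1 @ ww 1 @ ww k @ r" using k ww_commute[of 1 k] by simp
  also have "\<dots> \<sim> ww k @ r" using k ww_square[of 1] by simp
  finally show ?thesis .
qed

lemma tw_ww_le:
  "2 \<le> j \<Longrightarrow> j \<le> k \<Longrightarrow> k \<le> n - 1 \<Longrightarrow> tw j @ ww k @ r \<sim> ww 1 @ ww k @ tw j @ r"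
proof (induction j arbitrary: r rule: nat_induct_at_least)
  case base
  then show ?case using S1_ww by (simp add: tw_2)
next
  case (Suc j)
  have "tw (Suc j) @ ww k @ r = tw j @ S j # ww k @ r" using Suc by (simp add: tw_Suc)
  also have "\<dots> \<sim> tw j @ ww k @ S j # r" using Suc by (simp add: S_ww_commute_low)
  also have "\<dots> \<sim> ww 1 @ ww k @ tw j @ S j # r" using Suc by simp
  also have "\<dots> = ww 1 @ ww k @ tw (Suc j) @ r" using Suc by (simp add: tw_Suc)
  finally show ?case .
qed

lemma tw_Suc_ww:
  "1 \<le> p \<Longrightarrow> p \<le> n - 1 \<Longrightarrow> tw (Suc p) @ ww p @ r \<sim> ww 1 @ tw (Suc p) @ r"
proof (induction p arbitrary: r rule: nat_induct_at_least)
  case base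
  have "tw (Suc 1) @ ww 1 @ r = S 1 # S 1 # S1' # r" by (simp add: tw_def ww_def)
  also have "\<dots> \<sim> S 1 # S1' # S 1 # r"
    using base by (simp add: S1'_S_commute[THEN deq.sym])
  also have "\<dots> = ww 1 @ tw (Suc 1) @ r" by (simp add: tw_def ww_def)
  finally show ?case .
next
  case (Suc p)
  have "tw (Suc (Suc p)) @ ww (Suc p) @ r =
      tw (Suc p) @ S (Suc p) # S (Suc p) # ww p @ S (Suc p) # r"
    using Suc by (simp add: tw_Suc ww_Suc)
  also have "\<dots> \<sim> tw (Suc p) @ ww p @ S (Suc p) # r" using Suc by (simp add: S_square)
  also have "\<dots> \<sim> ww 1 @ tw (Suc p) @ S (Suc p) # r" using Suc by simp
  also have "\<dots> = ww 1 @ tw (Suc (Suc p)) @ r" using Suc by (simp add: tw_Suc)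
  finally show ?case .
qed

lemma tw_ww:
  assumes "1 \<le> p" "p + 2 \<le> q" "q \<le> n"
  shows "tw q @ ww p @ r \<sim> ww 1 @ ww (Suc p) @ tw q @ r"
  using assms(2,3)
proof (induction q arbitrary: r rule: nat_induct_at_least)
  case base
  have "tw (p + 2) @ ww p @ r = tw (Suc p) @ S (Suc p) # ww p @ r" using assms by (simp add: tw_Suc)
  also have "\<dots> \<sim> tw (Suc p) @ S (Suc p) # ww p @ S (Suc p) # S (Suc p) # r"
    using base by (simp add: S_square[THEN deq.sym])
  also have "\<dots> = tw (Suc p) @ ww (Suc p) @ S (Suc p) # r" using assms by (simp add: ww_Suc)
  also have "\<dots> \<sim> ww 1 @ ww (Suc p) @ tw (Suc p) @ S (Suc p) # r"
    using assms base tw_ww_le[of "Suc p" "Suc p"] by simp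
  also have "\<dots> = ww 1 @ ww (Suc p) @ tw (p + 2) @ r" using assms by (simp add: tw_Suc)
  finally show ?case .
next
  case (Suc q)
  have "tw (Suc q) @ ww p @ r = tw q @ S q # ww p @ r" using Suc assms by (simp add: tw_Suc)
  also have "\<dots> \<sim> tw q @ ww p @ S q # r" using Suc assms by (simp add: S_ww_commute_high)
  also have "\<dots> \<sim> ww 1 @ ww (Suc p) @ tw q @ S q # r" using Suc by simp
  also have "\<dots> = ww 1 @ ww (Suc p) @ tw (Suc q) @ r" using Suc assms by (simp add: tw_Suc)
  finally show ?case .
qed

lemma tw_ww_ww:
  assumes "1 \<le> a" "1 \<le> b" "a + 2 \<le> q" "b + 2 \<le> q" "q \<le> n"
  shows "tw q @ ww a @ ww b @ r \<sim> ww (Suc a) @ ww (Suc b) @ tw q @ r"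
proof -
  have "tw q @ ww a @ ww b @ r \<sim> ww 1 @ ww (Suc a) @ tw q @ ww b @ r"
    using assms tw_ww[of a q] by simp
  also have "\<dots> \<sim> ww 1 @ ww (Suc a) @ ww 1 @ ww (Suc b) @ tw q @ r"
    using assms tw_ww[of b q] by simp
  also have "\<dots> \<sim> ww (Suc a) @ ww (Suc b) @ tw q @ r"
    using assms ww_1_ww_ww_1[of "Suc a"] by simp
  finally show ?thesis .
qed

lemma tw_Suc_ww_ww:
  assumes "1 \<le> a" "a < p" "p \<le> n - 1"
  shows "tw (Suc p) @ ww a @ ww p @ r \<sim> ww (Suc a) @ tw (Suc p) @ r"
proof -
  have "tw (Suc p) @ ww a @ ww p @ r \<sim> ww 1 @ ww (Suc a) @ tw (Suc p) @ ww p @ r"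
    using assms tw_ww[of a "Suc p"] by simp
  also have "\<dots> \<sim> ww 1 @ ww (Suc a) @ ww 1 @ tw (Suc p) @ r"
    using assms tw_Suc_ww[of p] by simp
  also have "\<dots> \<sim> ww (Suc a) @ tw (Suc p) @ r"
    using assms ww_1_ww_ww_1[of "Suc a"] by simp
  finally show ?thesis .
qed

lemma ww_tw:
  assumes "2 \<le> p" "p < q" "q \<le> n - 1"
  shows "ww q @ tw p @ r \<sim> ww 1 @ tw p @ ww q @ r"
proof -
  have "ww 1 @ tw p @ ww q @ r \<sim> ww 1 @ ww 1 @ ww q @ tw p @ r"
    using assms tw_ww_le[of p q] by simp
  also have "\<dots> \<sim> ww q @ tw p @ r"
    using assms ww_square[of 1] by simp
  finally show ?thesis by (rule deq.sym)
qed

lemma tpow_ww: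
  assumes "1 \<le> p" "p < q" "q \<le> n" "1 \<le> i" "i < q"
  shows "tpow q i @ ww p @ r \<sim>
    (if q = p + i then ww i @ tpow q i
     else if q > p + i then ww i @ ww (p + i) @ tpow q i
     else ww (p + i - q) @ ww i @ tpow q i) @ r"
proof -
  define R where "R j = (if q = p + j then ww j @ tpow q j
     else if q > p + j then ww j @ ww (p + j) @ tpow q j
     else ww (p + j - q) @ ww j @ tpow q j)" for j
  have "tpow q i @ ww p @ r \<sim> R i @ r"
    using assms(4,5)
  proof (induction i arbitrary: r rule: nat_induct_at_least)
    case base
    then show ?case
      using assms tw_Suc_ww[of p] tw_ww[of p q] by (auto simp: R_def tpow_def)
  next
    case (Suc i)
    have "tpow q (Suc i) @ ww p @ r \<sim> tw q @ R i @ r"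
      using Suc by (simp add: tpow_Suc)
    also have "\<dots> \<sim> R (Suc i) @ r"
    proof -
      consider "q = p + i" | "q = Suc (p + i)" | "Suc (p + i) < q" | "q < p + i" by linarith
      then show ?thesis
      proof cases
        case 1
        then show ?thesis using assms Suc tw_ww[of i q] by (simp add: R_def tpow_Suc)
      next
        case 2
        then show ?thesis using assms Suc tw_Suc_ww_ww[of i "p + i"] by (simp add: R_def tpow_Suc)
      next
        case 3
        then show ?thesis using assms Suc tw_ww_ww[of i "p + i" q] by (simp add: R_def tpow_Suc)
      next
        case 4
        then show ?thesis using assms Suc tw_ww_ww[of "p + i - q" i q]
          by (simp add: R_def tpow_Suc Suc_diff_le)
      qed
    qed
    finally show ?case .
  qed
  then show ?thesis by (simp add: R_def)
qed

lemma ww_tpow: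
  assumes "2 \<le> p" "p < q" "q \<le> n - 1" "1 \<le> i" "i < p"
  shows "ww q @ tpow p i @ r \<sim> ww i @ tpow p i @ ww q @ r"
  using assms(4,5)
proof (induction i arbitrary: r rule: nat_induct_at_least)
  case base
  then show ?case using assms ww_tw by (simp add: tpow_def)
next
  case (Suc i)
  have "ww q @ tpow p (Suc i) @ r = ww q @ tw p @ tpow p i @ r" by (simp add: tpow_Suc)
  also have "\<dots> \<sim> ww 1 @ tw p @ ww q @ tpow p i @ r" using assms ww_tw by simp
  also have "\<dots> \<sim> ww 1 @ tw p @ ww i @ tpow p i @ ww q @ r" using Suc by simp
  also have "\<dots> \<sim> ww 1 @ ww 1 @ ww (Suc i) @ tw p @ tpow p i @ ww q @ r"
    using assms Suc tw_ww[of i p] by simp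
  also have "\<dots> \<sim> ww (Suc i) @ tw p @ tpow p i @ ww q @ r"
    using assms ww_square[of 1] by simp
  also have "\<dots> = ww (Suc i) @ tpow p (Suc i) @ ww q @ r" by (simp add: tpow_Suc)
  finally show ?case .
qed

end

theorem mainTheorem5:
  fixes n :: nat
  assumes "n \<ge> 2"
  shows "(\<forall>p q. 1 \<le> p \<and> p < q \<and> q \<le> n - 1 \<longrightarrow>
            deq n (ww q @ ww p) (ww p @ ww q))
       \<and> (\<forall>p q i. 1 \<le> p \<and> p < q \<and> q \<le> n \<and> p \<le> n - 1 \<and> 1 \<le> i \<and> i \<le> q - 1 \<longrightarrow>
            deq n (tpow q i @ ww p)
              (if q = p + i then ww i @ tpow q i
               else if q > p + i then ww i @ ww (p + i) @ tpow q i
               else ww (p + i - q) @ ww i @ tpow q i))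
       \<and> (\<forall>p q i. 2 \<le> p \<and> p < q \<and> q \<le> n - 1 \<and> 1 \<le> i \<and> i \<le> p - 1 \<longrightarrow>
            deq n (ww q @ tpow p i) (ww i @ tpow p i @ ww q))"
proof (intro conjI allI impI, goal_cases)
  \<comment> \<open>The hypothesis \<open>n \<ge> 2\<close> is implied by the index bounds of each part.\<close>
  case (1 p q)
  then show ?case using ww_commute[where r = "[]"] by simp
next
  case (2 p q i)
  then have "1 \<le> p" "p < q" "q \<le> n" "1 \<le> i" "i < q" by auto
  from tpow_ww[OF this, where r = "[]"] show ?case by (simp only: append_Nil2)
next
  case (3 p q i)
  then have "2 \<le> p" "p < q" "q \<le> n - 1" "1 \<le> i" "i < p" by auto
  from ww_tpow[OF this, where r = "[]"] show ?case by simp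
qed

end
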